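(* Let $\Omega$ be a finite set of $M$ states and consider a time series $\omega^{1}\omega^{2}\omega^{3}\cdots$ with $\omega^{i}\in\Omega$. Let $\Pi$ be its predictability and $R$ the Bayes error rate of the $M$-classification problem whose samples are indexed by the time steps $i=1,\dots,n$, with sample $i$ having class label $\omega^{i}$ and feature $x_{i-1}=\omega^{1}\cdots\omega^{i-1}$, the series before that state ($x_0=\varnothing$), in the limit $n\to\infty$. Then $$\Pi = 1-R.$$
   Context: Predictability: for $n\ge 1$ let $x_{n-1}=\omega^{1}\cdots\omega^{n-1}$ denote the history before time $n$. Let $\pi(x_{n-1})=\sup_{\omega\in\Omega}\Pr[\omega^{n}=\omega\mid x_{n-1}]$ be the probability of the most probable next state given the history. The predictability of the $n$-th state is $\Pi(n)=\sum_{x_{n-1}}P(x_{n-1})\,\pi(x_{n-1})$, where $P(x_{n-1})$ is the probability of observing the history $x_{n-1}$ and the sum runs over all possible histories of length $n-1$. The overall predictability is $\Pi=\lim_{n\to\infty}\frac{1}{n}\sum_{i=1}^{n}\Pi(i)$. Bayes error rate: for an $M$-class problem with classes $\omega_1,\dots,\omega_M$, prior probabilities $p(\omega_j)$, feature set $X'$ and class-conditional densities $p(x\mid\omega_j)$, $$R=1-\sum_{j=1}^{M}\int_{\Gamma_j}p(\omega_j)\,p(x\mid\omega_j)\,dx,$$ where $\Gamma_j=\{x\in X' : p(\omega_j)p(x\mid\omega_j)>\max_{k\neq j}p(\omega_k)p(x\mid\omega_k)\}$. *)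

theory Defs
  imports "HOL-Probability.Probability"
begin

text \<open>A history x_{n-1} is a list of
  length n-1; its entry k (0-based) is the state at time k+1.\<close>

definition hist_event :: "'b measure \<Rightarrow> (nat \<Rightarrow> 'b \<Rightarrow> 'a) \<Rightarrow> 'a list \<Rightarrow> 'b set" where
  "hist_event M X xs = {s \<in> space M. \<forall>k<length xs. X (Suc k) s = xs ! k}"

definition P_hist :: "'b measure \<Rightarrow> (nat \<Rightarrow> 'b \<Rightarrow> 'a) \<Rightarrow> 'a list \<Rightarrow> real" where
  "P_hist M X xs = measure M (hist_event M X xs)"

text \<open>Pr[omega^n = w | x_{n-1}] with n = length xs + 1.\<close>
definition next_prob :: "'b measure \<Rightarrow> (nat \<Rightarrow> 'b \<Rightarrow> 'a) \<Rightarrow> 'a list \<Rightarrow> 'a \<Rightarrow> real" where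
  "next_prob M X xs w = P_hist M X (xs @ [w]) / P_hist M X xs"

definition pi_hist :: "'a set \<Rightarrow> 'b measure \<Rightarrow> (nat \<Rightarrow> 'b \<Rightarrow> 'a) \<Rightarrow> 'a list \<Rightarrow> real" where
  "pi_hist \<Omega> M X xs = Sup ((\<lambda>w. next_prob M X xs w) ` \<Omega>)"

definition histories :: "'a set \<Rightarrow> nat \<Rightarrow> 'a list set" where
  "histories \<Omega> m = {xs. set xs \<subseteq> \<Omega> \<and> length xs = m}"

definition Pi_n :: "'a set \<Rightarrow> 'b measure \<Rightarrow> (nat \<Rightarrow> 'b \<Rightarrow> 'a) \<Rightarrow> nat \<Rightarrow> real" where
  "Pi_n \<Omega> M X n = (\<Sum>xs\<in>histories \<Omega> (n - 1). P_hist M X xs * pi_hist \<Omega> M X xs)"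

text \<open>(1/n) * sum_{i=1}^n Pi(i); the predictability is the limit of this sequence.\<close>
definition avg_pred :: "'a set \<Rightarrow> 'b measure \<Rightarrow> (nat \<Rightarrow> 'b \<Rightarrow> 'a) \<Rightarrow> nat \<Rightarrow> real" where
  "avg_pred \<Omega> M X n = (\<Sum>i=1..n. Pi_n \<Omega> M X i) / real n"

text \<open>Classes C, priors p, class-conditional densities f (w.r.t. counting measure on the
  finite feature set X'). The decision region of class j consists of the features where
  p j * f j x is maximal; ties are broken by a fixed choice so that the regions partition X'.\<close>

definition bayes_choice :: "'c set \<Rightarrow> ('c \<Rightarrow> real) \<Rightarrow> ('c \<Rightarrow> 'x \<Rightarrow> real) \<Rightarrow> 'x \<Rightarrow> 'c" where
  "bayes_choice C p f x = (SOME j. j \<in> C \<and> (\<forall>k\<in>C. p k * f k x \<le> p j * f j x))"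

definition bayes_region :: "'c set \<Rightarrow> ('c \<Rightarrow> real) \<Rightarrow> ('c \<Rightarrow> 'x \<Rightarrow> real) \<Rightarrow> 'x set \<Rightarrow> 'c \<Rightarrow> 'x set" where
  "bayes_region C p f X' j = {x \<in> X'. bayes_choice C p f x = j}"

definition bayes_error :: "'c set \<Rightarrow> ('c \<Rightarrow> real) \<Rightarrow> ('c \<Rightarrow> 'x \<Rightarrow> real) \<Rightarrow> 'x set \<Rightarrow> real" where
  "bayes_error C p f X' = 1 - (\<Sum>j\<in>C. \<Sum>x\<in>bayes_region C p f X' j. p j * f j x)"

text \<open>Samples i = 1..n (equally weighted), label omega^i, feature x_{i-1}.
  Prior of class w: (1/n) sum_i Pr[X i = w].
  Joint weight of (feature xs, class w): (1/n) P(xs @ [w]) (for length xs < n).\<close>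

definition ts_prior :: "'b measure \<Rightarrow> (nat \<Rightarrow> 'b \<Rightarrow> 'a) \<Rightarrow> nat \<Rightarrow> 'a \<Rightarrow> real" where
  "ts_prior M X n w = (\<Sum>i=1..n. measure M {s \<in> space M. X i s = w}) / real n"

definition ts_cond :: "'b measure \<Rightarrow> (nat \<Rightarrow> 'b \<Rightarrow> 'a) \<Rightarrow> nat \<Rightarrow> 'a \<Rightarrow> 'a list \<Rightarrow> real" where
  "ts_cond M X n w xs =
     (if length xs < n then P_hist M X (xs @ [w]) / real n else 0) / ts_prior M X n w"

definition ts_features :: "'a set \<Rightarrow> nat \<Rightarrow> 'a list set" where
  "ts_features \<Omega> n = {xs. set xs \<subseteq> \<Omega> \<and> length xs < n}"

definition ts_bayes_error :: "'a set \<Rightarrow> 'b measure \<Rightarrow> (nat \<Rightarrow> 'b \<Rightarrow> 'a) \<Rightarrow> nat \<Rightarrow> real" where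
  "ts_bayes_error \<Omega> M X n = bayes_error \<Omega> (ts_prior M X n) (ts_cond M X n) (ts_features \<Omega> n)"

end

theory Submission
  imports Defs
begin

text \<open>In the classification problem built from the first \<open>n\<close> steps, the joint weight of
  feature \<open>x\<^sub>i\<^sub>-\<^sub>1\<close> and label \<open>\<omega>\<close> is \<open>P(x\<^sub>i\<^sub>-\<^sub>1\<omega>)/n\<close>. The Bayes classifier picks, for each
  feature, a label of maximal joint weight, so \<open>1 - R\<^sub>n\<close> is the sum over all histories
  \<open>x\<close> of length \<open>< n\<close> of \<open>max\<^sub>\<omega> P(x\<omega>)/n = P(x) \<pi>(x)/n\<close>. Grouping the histories by length
  turns this into \<open>(1/n) \<Sum>\<^sub>i\<^sub>\<le>\<^sub>n \<Pi>(i)\<close>. Hence \<open>R\<^sub>n = 1 - (1/n) \<Sum>\<^sub>i\<^sub>\<le>\<^sub>n \<Pi>(i)\<close> for every \<open>n \<ge> 1\<close>,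
  and the two limits exist together.\<close>

lemma obtain_arg_max_finite:
  fixes g :: "'c \<Rightarrow> 'd::linorder"
  assumes "finite C" "C \<noteq> {}"
  obtains j where "j \<in> C" "\<And>k. k \<in> C \<Longrightarrow> g k \<le> g j"
proof -
  have "Max (g ` C) \<in> g ` C"
    using assms by (intro Max_in) auto
  then obtain j where j: "j \<in> C" "g j = Max (g ` C)"
    by auto
  moreover have "g k \<le> g j" if "k \<in> C" for k
    unfolding j(2) using assms(1) that by (intro Max_ge) auto
  ultimately show thesis
    using that by blast
qed

lemma bayes_choice_maximal:
  assumes "finite C" "C \<noteq> {}"
  shows "bayes_choice C p f x \<in> C"
    and "k \<in> C \<Longrightarrow> p k * f k x \<le> p (bayes_choice C p f x) * f (bayes_choice C p f x) x"
proof -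
  obtain j where "j \<in> C" "\<And>k. k \<in> C \<Longrightarrow> p k * f k x \<le> p j * f j x"
    using obtain_arg_max_finite[OF assms, where g = "\<lambda>j. p j * f j x"] by blast
  then have "\<exists>j. j \<in> C \<and> (\<forall>k\<in>C. p k * f k x \<le> p j * f j x)"
    by blast
  then have "bayes_choice C p f x \<in> C \<and>
      (\<forall>k\<in>C. p k * f k x \<le> p (bayes_choice C p f x) * f (bayes_choice C p f x) x)"
    unfolding bayes_choice_def by (rule someI_ex)
  then show "bayes_choice C p f x \<in> C"
    and "k \<in> C \<Longrightarrow> p k * f k x \<le> p (bayes_choice C p f x) * f (bayes_choice C p f x) x"
    by auto
qed

lemma bayes_error_eq_Max:
  assumes "finite C" "C \<noteq> {}" "finite X'"
  shows "bayes_error C p f X' = 1 - (\<Sum>x\<in>X'. Max ((\<lambda>j. p j * f j x) ` C))"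
proof -
  let ?c = "bayes_choice C p f"
  have Max_eq: "Max ((\<lambda>j. p j * f j x) ` C) = p (?c x) * f (?c x) x" for x
    using assms(1) bayes_choice_maximal(1)[OF assms(1,2), of p f x]
      bayes_choice_maximal(2)[OF assms(1,2), of _ p f x]
    by (intro Max_eqI) auto
  have "(\<Sum>j\<in>C. \<Sum>x\<in>bayes_region C p f X' j. p j * f j x)
      = (\<Sum>j\<in>C. \<Sum>x\<in>{x\<in>X'. ?c x = j}. p (?c x) * f (?c x) x)"
    unfolding bayes_region_def by (intro sum.cong refl) auto
  also have "\<dots> = (\<Sum>x\<in>X'. p (?c x) * f (?c x) x)"
    using assms bayes_choice_maximal(1)[OF assms(1,2), of p f] by (intro sum.group) auto
  finally show ?thesis
    unfolding bayes_error_def Max_eq by simp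
qed

lemma finite_histories: "finite \<Omega> \<Longrightarrow> finite (histories \<Omega> m)"
  by (simp add: histories_def finite_lists_length_eq)

lemma ts_features_eq_UN_histories: "ts_features \<Omega> n = (\<Union>m<n. histories \<Omega> m)"
  unfolding ts_features_def histories_def by auto

lemma finite_ts_features: "finite \<Omega> \<Longrightarrow> finite (ts_features \<Omega> n)"
  by (simp add: ts_features_eq_UN_histories finite_histories)

lemma sum_Pi_n_eq_sum_ts_features:
  assumes "finite \<Omega>"
  shows "(\<Sum>i=1..n. Pi_n \<Omega> M X i) = (\<Sum>xs\<in>ts_features \<Omega> n. P_hist M X xs * pi_hist \<Omega> M X xs)"
proof -
  have "(\<Sum>i=1..n. Pi_n \<Omega> M X i) = (\<Sum>m<n. Pi_n \<Omega> M X (Suc m))"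
    by (simp add: sum.atLeast1_atMost_eq)
  also have "\<dots> = (\<Sum>xs\<in>(\<Union>m<n. histories \<Omega> m). P_hist M X xs * pi_hist \<Omega> M X xs)"
    unfolding Pi_n_def using assms
    by (subst sum.UNION_disjoint) (auto simp: histories_def finite_lists_length_eq)
  finally show ?thesis
    by (simp add: ts_features_eq_UN_histories)
qed

lemma P_hist_nonneg: "P_hist M X xs \<ge> 0"
  unfolding P_hist_def by simp

context prob_space
begin

context
  fixes X :: "nat \<Rightarrow> 'a \<Rightarrow> 'c"
  assumes X_measurable: "\<And>i. X i \<in> M \<rightarrow>\<^sub>M count_space UNIV"
begin

lemma state_event_measurable: "{s \<in> space M. X i s = w} \<in> events"
proof -
  have "{s \<in> space M. X i s = w} = X i -` {w} \<inter> space M"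
    by auto
  then show ?thesis
    using X_measurable by (simp add: measurable_count_space_eq2)
qed

lemma hist_event_measurable: "hist_event M X xs \<in> events"
proof -
  have "hist_event M X xs = {s \<in> space M. \<forall>k\<in>{..<length xs}. X (Suc k) s = xs ! k}"
    unfolding hist_event_def Ball_def lessThan_iff ..
  also have "\<dots> \<in> events"
    by (rule sets.sets_Collect_finite_All) (simp_all add: state_event_measurable)
  finally show ?thesis .
qed

lemma P_hist_snoc_le: "P_hist M X (xs @ [w]) \<le> P_hist M X xs"
proof -
  have "hist_event M X (xs @ [w]) \<subseteq> hist_event M X xs"
    unfolding hist_event_def by (auto simp: nth_append)
  then show ?thesis
    unfolding P_hist_def using hist_event_measurable by (rule finite_measure_mono)
qed

lemma P_hist_snoc_le_marginal:
  "P_hist M X (xs @ [w]) \<le> prob {s \<in> space M. X (Suc (length xs)) s = w}"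
proof -
  have "hist_event M X (xs @ [w]) \<subseteq> {s \<in> space M. X (Suc (length xs)) s = w}"
    unfolding hist_event_def by (auto simp: nth_append)
  then show ?thesis
    unfolding P_hist_def using state_event_measurable by (rule finite_measure_mono)
qed

lemma P_hist_mult_pi_hist:
  assumes "finite \<Omega>" "\<Omega> \<noteq> {}"
  shows "P_hist M X xs * pi_hist \<Omega> M X xs = Max ((\<lambda>w. P_hist M X (xs @ [w])) ` \<Omega>)"
proof (cases "P_hist M X xs = 0")
  case True
  have "P_hist M X (xs @ [w]) = 0" for w
    using True P_hist_snoc_le[of xs w] P_hist_nonneg[of M X "xs @ [w]"] by linarith
  then have "(\<lambda>w. P_hist M X (xs @ [w])) ` \<Omega> = {0}"
    using assms(2) by auto
  then show ?thesis
    using True by simp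
next
  case False
  then have pos: "P_hist M X xs > 0"
    using P_hist_nonneg[of M X xs] by simp
  have "pi_hist \<Omega> M X xs = Max ((\<lambda>y. y / P_hist M X xs) ` (\<lambda>w. P_hist M X (xs @ [w])) ` \<Omega>)"
    unfolding pi_hist_def next_prob_def image_image using assms by (simp add: cSup_eq_Max)
  also have "\<dots> = Max ((\<lambda>w. P_hist M X (xs @ [w])) ` \<Omega>) / P_hist M X xs"
    using pos assms by (intro mono_Max_commute[symmetric] monoI divide_right_mono) auto
  finally show ?thesis
    using pos by simp
qed

lemma ts_prior_mult_ts_cond:
  assumes "length xs < n"
  shows "ts_prior M X n j * ts_cond M X n j xs = P_hist M X (xs @ [j]) / real n"
proof (cases "ts_prior M X n j = 0")
  case True
  \<comment> \<open>A class of prior \<open>0\<close> gets density \<open>0\<close> from the division by \<open>0\<close>, but then its joint weight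
      vanishes too, since it is dominated by the prior.\<close>
  have "prob {s \<in> space M. X (Suc (length xs)) s = j} \<le> (\<Sum>i=1..n. prob {s \<in> space M. X i s = j})"
    using assms by (intro member_le_sum) auto
  also have "\<dots> = 0"
    using True assms unfolding ts_prior_def by simp
  finally have "P_hist M X (xs @ [j]) = 0"
    using P_hist_snoc_le_marginal[of xs j] P_hist_nonneg[of M X "xs @ [j]"] by linarith
  then show ?thesis
    using True by simp
next
  case False
  then show ?thesis
    unfolding ts_cond_def using assms by simp
qed

lemma ts_bayes_error_eq_1_minus_avg_pred:
  assumes "finite \<Omega>" "\<Omega> \<noteq> {}" "n > 0"
  shows "ts_bayes_error \<Omega> M X n = 1 - avg_pred \<Omega> M X n"
proof -
  have joint_Max: "Max ((\<lambda>j. ts_prior M X n j * ts_cond M X n j xs) ` \<Omega>)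
      = P_hist M X xs * pi_hist \<Omega> M X xs / real n" if "xs \<in> ts_features \<Omega> n" for xs
  proof -
    have "Max ((\<lambda>j. ts_prior M X n j * ts_cond M X n j xs) ` \<Omega>)
        = Max ((\<lambda>y. y / real n) ` (\<lambda>j. P_hist M X (xs @ [j])) ` \<Omega>)"
      using that ts_prior_mult_ts_cond
      unfolding image_image ts_features_def by (intro arg_cong[where f = Max] image_cong) auto
    also have "\<dots> = Max ((\<lambda>j. P_hist M X (xs @ [j])) ` \<Omega>) / real n"
      using assms(1,2) by (intro mono_Max_commute[symmetric] monoI divide_right_mono) auto
    finally show ?thesis
      using P_hist_mult_pi_hist[OF assms(1,2)] by simp
  qed
  have "ts_bayes_error \<Omega> M X n
      = 1 - (\<Sum>xs\<in>ts_features \<Omega> n. P_hist M X xs * pi_hist \<Omega> M X xs / real n)"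
    unfolding ts_bayes_error_def using assms(1,2)
    by (simp add: bayes_error_eq_Max finite_ts_features joint_Max)
  also have "\<dots> = 1 - avg_pred \<Omega> M X n"
    unfolding avg_pred_def sum_Pi_n_eq_sum_ts_features[OF assms(1)] by (simp add: sum_divide_distrib)
  finally show ?thesis .
qed

end

end

lemma tendsto_const_diff_iff:
  fixes a :: "'a \<Rightarrow> 'b::real_normed_vector"
  shows "((\<lambda>n. c - a n) \<longlongrightarrow> c - p) F \<longleftrightarrow> (a \<longlongrightarrow> p) F"
proof
  assume "((\<lambda>n. c - a n) \<longlongrightarrow> c - p) F"
  from tendsto_diff[OF tendsto_const[of c] this] show "(a \<longlongrightarrow> p) F"
    by simp
qed (intro tendsto_intros)

theorem theorem1:
  fixes M :: "'b measure" and X :: "nat \<Rightarrow> 'b \<Rightarrow> 'a" and \<Omega> :: "'a set" and pred :: real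
  assumes "prob_space M"
    and "finite \<Omega>" and "\<Omega> \<noteq> {}"
    and "\<And>i. X i \<in> M \<rightarrow>\<^sub>M count_space UNIV"
    and "\<And>i s. s \<in> space M \<Longrightarrow> X i s \<in> \<Omega>"
  shows "(avg_pred \<Omega> M X \<longlonglongrightarrow> pred) \<longleftrightarrow> (ts_bayes_error \<Omega> M X \<longlonglongrightarrow> 1 - pred)"
proof -
  have "ts_bayes_error \<Omega> M X n = 1 - avg_pred \<Omega> M X n" if "n > 0" for n
    using prob_space.ts_bayes_error_eq_1_minus_avg_pred[OF assms(1), where X = X] assms(2-4) that
    by blast
  then have "eventually (\<lambda>n. 1 - avg_pred \<Omega> M X n = ts_bayes_error \<Omega> M X n) sequentially"
    using eventually_gt_at_top[of 0] by (metis (mono_tags, lifting) eventually_mono)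
  then have "(ts_bayes_error \<Omega> M X \<longlonglongrightarrow> 1 - pred) \<longleftrightarrow> ((\<lambda>n. 1 - avg_pred \<Omega> M X n) \<longlonglongrightarrow> 1 - pred)"
    by (rule tendsto_cong[symmetric])
  also have "\<dots> \<longleftrightarrow> (avg_pred \<Omega> M X \<longlonglongrightarrow> pred)"
    by (rule tendsto_const_diff_iff)
  finally show ?thesis ..
qed

end
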